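(* Let $R$ be a $\Bbbk$-algebra, $\sigma\in\operatorname{Aut}_\Bbbk(R)$, $H,J$ two-sided ideals of $R$, and $B=R(t,\sigma,H,J)$. Then: (1) $B$ is a $\mathbb Z$-graded subalgebra of $R[t,t^{-1};\sigma]$, with $B_n=I^{(n)}t^n$ in degree $n$; (2) $B$ is generated as a $\Bbbk$-algebra by $R$, $Jt=\{jt: j\in J\}$ and $\sigma^{-1}(H)t^{-1}=\{\sigma^{-1}(h)t^{-1}:h\in H\}$; (3) $B$ is a domain if and only if $R$ is a domain; (4) suppose $R$ is a domain, $\sigma$ has infinite order, and for no integer $k\neq 0$ does there exist a nonzero $a\in R$ with $ra=a\sigma^k(r)$ for all $r\in R$. Then the center of $B$ equals $Z(R)^{\langle\sigma\rangle}=\{z\in Z(R):\sigma(z)=z\}$, where $Z(R)$ is the center of $R$.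
   Context: $\Bbbk$ is a field; all algebras are associative unital $\Bbbk$-algebras. For an algebra $R$ and $\sigma\in\operatorname{Aut}_\Bbbk(R)$, $R[t,t^{-1};\sigma]$ is the skew Laurent ring: generated over $R$ by $t,t^{-1}$ with $tt^{-1}=t^{-1}t=1$ and $t^{\pm1}r=\sigma^{\pm1}(r)t^{\pm1}$ for $r\in R$. Given two-sided ideals $H,J$ of $R$, set $I^{(0)}=R$, $I^{(n)}=J\sigma(J)\cdots\sigma^{n-1}(J)$ for $n\ge1$, and $I^{(n)}=\sigma^{-1}(H)\sigma^{-2}(H)\cdots\sigma^{n}(H)$ for $n\le-1$; it is assumed throughout that $I^{(n)}\neq0$ for all $n\in\mathbb Z$. The Bell–Rogalski (BR) algebra is $R(t,\sigma,H,J)=\bigoplus_{n\in\mathbb Z}I^{(n)}t^n\subseteq R[t,t^{-1};\sigma]$. *)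

theory Defs
  imports Main
begin

text \<open>A (unital associative) k-algebra is modelled as a ring type 'r together with a
  ring homomorphism alg from the field 'k into the centre of 'r.\<close>

definition k_algebra :: "('k::field \<Rightarrow> 'r::ring_1) \<Rightarrow> bool" where
  "k_algebra alg \<longleftrightarrow>
     alg 1 = 1 \<and> (\<forall>a b. alg (a + b) = alg a + alg b) \<and> (\<forall>a b. alg (a * b) = alg a * alg b)
     \<and> (\<forall>c r. alg c * r = r * alg c)"

definition k_automorphism :: "('k::field \<Rightarrow> 'r::ring_1) \<Rightarrow> ('r \<Rightarrow> 'r) \<Rightarrow> bool" where
  "k_automorphism alg \<sigma> \<longleftrightarrow>
     bij \<sigma> \<and> (\<forall>a b. \<sigma> (a + b) = \<sigma> a + \<sigma> b) \<and> (\<forall>a b. \<sigma> (a * b) = \<sigma> a * \<sigma> b)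
     \<and> \<sigma> 1 = 1 \<and> (\<forall>c. \<sigma> (alg c) = alg c)"

definition zpow :: "('r \<Rightarrow> 'r) \<Rightarrow> int \<Rightarrow> 'r \<Rightarrow> 'r" where
  "zpow \<sigma> i = (if 0 \<le> i then \<sigma> ^^ nat i else inv \<sigma> ^^ nat (- i))"

definition two_sided_ideal :: "'r::ring_1 set \<Rightarrow> bool" where
  "two_sided_ideal A \<longleftrightarrow> 0 \<in> A \<and> (\<forall>x\<in>A. \<forall>y\<in>A. x + y \<in> A \<and> - x \<in> A)
     \<and> (\<forall>r. \<forall>x\<in>A. r * x \<in> A \<and> x * r \<in> A)"

definition ring_domain :: "'r::ring_1 itself \<Rightarrow> bool" where
  "ring_domain _ \<longleftrightarrow> (1::'r) \<noteq> 0 \<and> (\<forall>a b::'r. a * b = 0 \<longrightarrow> a = 0 \<or> b = 0)"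

definition ring_center :: "'r::ring_1 set" where
  "ring_center = {z. \<forall>r. z * r = r * z}"

inductive_set add_span :: "'r::ring_1 set \<Rightarrow> 'r set" for S where
  zero: "0 \<in> add_span S"
| gen: "x \<in> S \<Longrightarrow> x \<in> add_span S"
| add: "x \<in> add_span S \<Longrightarrow> y \<in> add_span S \<Longrightarrow> x + y \<in> add_span S"

definition ideal_prod :: "'r::ring_1 set \<Rightarrow> 'r set \<Rightarrow> 'r set" where
  "ideal_prod A B = add_span {a * b | a b. a \<in> A \<and> b \<in> B}"

fun prodseq :: "(nat \<Rightarrow> 'r::ring_1 set) \<Rightarrow> nat \<Rightarrow> 'r set" where
  "prodseq F 0 = UNIV"
| "prodseq F (Suc 0) = F 0"
| "prodseq F (Suc (Suc k)) = ideal_prod (prodseq F (Suc k)) (F (Suc k))"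

text \<open>I^(n): for n \<ge> 1, J sigma(J) ... sigma^(n-1)(J);
  for n \<le> -1, sigma^(-1)(H) sigma^(-2)(H) ... sigma^(n)(H); I^(0) = R.\<close>
definition Iseq :: "('r::ring_1 \<Rightarrow> 'r) \<Rightarrow> 'r set \<Rightarrow> 'r set \<Rightarrow> int \<Rightarrow> 'r set" where
  "Iseq \<sigma> H J n =
     (if 0 \<le> n then prodseq (\<lambda>i. zpow \<sigma> (int i) ` J) (nat n)
      else prodseq (\<lambda>i. zpow \<sigma> (- int i - 1) ` H) (nat (- n)))"

text \<open>Elements are finitely supported functions f :: int => R, f standing for
  the sum of (f n) t^n.  Multiplication: (a t^i)(b t^j) = a sigma^i(b) t^(i+j).\<close>

definition laurent :: "(int \<Rightarrow> 'r::ring_1) set" where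
  "laurent = {f. finite {n. f n \<noteq> 0}}"

definition lzero :: "int \<Rightarrow> 'r::ring_1" where
  "lzero = (\<lambda>_. 0)"

definition lmono :: "'r::ring_1 \<Rightarrow> int \<Rightarrow> int \<Rightarrow> 'r" where
  "lmono a n = (\<lambda>m. if m = n then a else 0)"

definition lone :: "int \<Rightarrow> 'r::ring_1" where
  "lone = lmono 1 0"

definition ladd :: "(int \<Rightarrow> 'r::ring_1) \<Rightarrow> (int \<Rightarrow> 'r) \<Rightarrow> int \<Rightarrow> 'r" where
  "ladd f g = (\<lambda>n. f n + g n)"

definition lmult :: "('r::ring_1 \<Rightarrow> 'r) \<Rightarrow> (int \<Rightarrow> 'r) \<Rightarrow> (int \<Rightarrow> 'r) \<Rightarrow> int \<Rightarrow> 'r" where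
  "lmult \<sigma> f g = (\<lambda>n. \<Sum>i\<in>{i. f i \<noteq> 0}. f i * zpow \<sigma> i (g (n - i)))"

definition lscale :: "('k::field \<Rightarrow> 'r::ring_1) \<Rightarrow> 'k \<Rightarrow> (int \<Rightarrow> 'r) \<Rightarrow> int \<Rightarrow> 'r" where
  "lscale alg c f = (\<lambda>n. alg c * f n)"

definition is_subalg :: "('k::field \<Rightarrow> 'r::ring_1) \<Rightarrow> ('r \<Rightarrow> 'r) \<Rightarrow> (int \<Rightarrow> 'r) set \<Rightarrow> bool" where
  "is_subalg alg \<sigma> B \<longleftrightarrow> B \<subseteq> laurent \<and> lone \<in> B
     \<and> (\<forall>f\<in>B. \<forall>g\<in>B. ladd f g \<in> B \<and> lmult \<sigma> f g \<in> B)
     \<and> (\<forall>c. \<forall>f\<in>B. lscale alg c f \<in> B)"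

definition gen_subalg :: "('k::field \<Rightarrow> 'r::ring_1) \<Rightarrow> ('r \<Rightarrow> 'r) \<Rightarrow> (int \<Rightarrow> 'r) set \<Rightarrow> (int \<Rightarrow> 'r) set" where
  "gen_subalg alg \<sigma> S = \<Inter> {B. is_subalg alg \<sigma> B \<and> S \<subseteq> B}"

definition BR_comp :: "('r::ring_1 \<Rightarrow> 'r) \<Rightarrow> 'r set \<Rightarrow> 'r set \<Rightarrow> int \<Rightarrow> (int \<Rightarrow> 'r) set" where
  "BR_comp \<sigma> H J n = {lmono a n | a. a \<in> Iseq \<sigma> H J n}"

definition BR :: "('r::ring_1 \<Rightarrow> 'r) \<Rightarrow> 'r set \<Rightarrow> 'r set \<Rightarrow> (int \<Rightarrow> 'r) set" where
  "BR \<sigma> H J = {f \<in> laurent. \<forall>n. f n \<in> Iseq \<sigma> H J n}"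

definition lcenter :: "('r::ring_1 \<Rightarrow> 'r) \<Rightarrow> (int \<Rightarrow> 'r) set \<Rightarrow> (int \<Rightarrow> 'r) set" where
  "lcenter \<sigma> B = {f \<in> B. \<forall>g\<in>B. lmult \<sigma> f g = lmult \<sigma> g f}"

definition lring_domain :: "('r::ring_1 \<Rightarrow> 'r) \<Rightarrow> (int \<Rightarrow> 'r) set \<Rightarrow> bool" where
  "lring_domain \<sigma> B \<longleftrightarrow> (lone::int \<Rightarrow> 'r) \<noteq> lzero
     \<and> (\<forall>f\<in>B. \<forall>g\<in>B. lmult \<sigma> f g = lzero \<longrightarrow> f = lzero \<or> g = lzero)"

end

theory Submission
  imports Defs
begin

text \<open>Everything rests on the grading rule I^(m) \<sigma>^m(I^(n)) \<subseteq> I^(m+n): applying \<sigma>^m shifts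
  the factors of a product of twisted copies of J (or of H), so products of equal sign
  concatenate, while for opposite signs the common factors cancel and the shorter product is
  absorbed by the ideal property. Hence B is a graded subalgebra, and since I^(n) t^n is
  spanned by the products of n elements j t (or \<sigma>^-1(h) t^-1), the given set generates B.
  Over a domain the product of the top coefficients of two nonzero elements survives.
  A central element f satisfies r f_n = f_n \<sigma>^n(r) for all r, so only f_0 can be nonzero,
  and commuting with some j t, 0 \<noteq> j \<in> J, makes f_0 \<sigma>-invariant.\<close>

definition ring_endo :: "('r::ring_1 \<Rightarrow> 'r) \<Rightarrow> bool" where
  "ring_endo f \<longleftrightarrow> (\<forall>a b. f (a + b) = f a + f b) \<and> (\<forall>a b. f (a * b) = f a * f b)"

lemma ring_endo_add: "ring_endo f \<Longrightarrow> f (a + b) = f a + f b"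
  by (simp add: ring_endo_def)

lemma ring_endo_mult: "ring_endo f \<Longrightarrow> f (a * b) = f a * f b"
  by (simp add: ring_endo_def)

lemma ring_endo_zero: "ring_endo f \<Longrightarrow> f 0 = 0"
  using ring_endo_add[of f 0 0] by simp

lemma ring_endo_minus: "ring_endo f \<Longrightarrow> f (- a) = - f a"
  using ring_endo_add[of f a "- a"] ring_endo_zero[of f] by (simp add: add_eq_0_iff2)

lemma ring_endo_funpow: "ring_endo f \<Longrightarrow> ring_endo (f ^^ n)"
  by (induction n) (simp_all add: ring_endo_def)

lemma ring_endo_inv:
  assumes "bij f" "ring_endo f"
  shows "ring_endo (inv f)"
proof -
  have "f (inv f a + inv f b) = a + b" "f (inv f a * inv f b) = a * b" for a b
    using assms by (simp_all add: ring_endo_add ring_endo_mult bij_is_surj surj_f_inv_f)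
  then show ?thesis
    using assms(1) unfolding ring_endo_def by (metis bij_inv_eq_iff)
qed

lemma two_sided_ideal_zero: "two_sided_ideal A \<Longrightarrow> 0 \<in> A"
  by (simp add: two_sided_ideal_def)

lemma two_sided_ideal_add: "two_sided_ideal A \<Longrightarrow> x \<in> A \<Longrightarrow> y \<in> A \<Longrightarrow> x + y \<in> A"
  by (simp add: two_sided_ideal_def)

lemma two_sided_ideal_mult_left: "two_sided_ideal A \<Longrightarrow> x \<in> A \<Longrightarrow> r * x \<in> A"
  by (simp add: two_sided_ideal_def)

lemma two_sided_ideal_mult_right: "two_sided_ideal A \<Longrightarrow> x \<in> A \<Longrightarrow> x * r \<in> A"
  by (simp add: two_sided_ideal_def)

lemma two_sided_ideal_UNIV: "two_sided_ideal (UNIV :: 'r::ring_1 set)"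
  by (simp add: two_sided_ideal_def)

lemma two_sided_ideal_sum:
  "two_sided_ideal A \<Longrightarrow> (\<And>i. i \<in> S \<Longrightarrow> f i \<in> A) \<Longrightarrow> sum f S \<in> A"
  by (induction S rule: infinite_finite_induct)
    (auto intro: two_sided_ideal_zero two_sided_ideal_add)

lemma two_sided_ideal_image:
  assumes "surj f" "ring_endo f" "two_sided_ideal A"
  shows "two_sided_ideal (f ` A)"
  unfolding two_sided_ideal_def
proof (intro conjI ballI allI)
  show "0 \<in> f ` A"
    using assms(2,3) ring_endo_zero two_sided_ideal_zero by (metis imageI)
next
  fix x y assume "x \<in> f ` A" "y \<in> f ` A"
  then obtain a b where "a \<in> A" "b \<in> A" "x = f a" "y = f b" by blast
  then have "x + y = f (a + b)" "- x = f (- a)"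
    using assms(2) by (simp_all add: ring_endo_add ring_endo_minus)
  moreover have "a + b \<in> A" "- a \<in> A"
    using \<open>a \<in> A\<close> \<open>b \<in> A\<close> assms(3) by (simp_all add: two_sided_ideal_def)
  ultimately show "x + y \<in> f ` A" "- x \<in> f ` A" by simp_all
next
  fix r x assume "x \<in> f ` A"
  then obtain a where "a \<in> A" "x = f a" by blast
  moreover obtain s where "r = f s" using assms(1) by (metis surjD)
  ultimately have "r * x = f (s * a)" "x * r = f (a * s)" "s * a \<in> A" "a * s \<in> A"
    using assms(2,3) by (simp_all add: ring_endo_mult two_sided_ideal_def)
  then show "r * x \<in> f ` A" "x * r \<in> f ` A" by simp_all
qed

lemma add_span_map:
  assumes "x \<in> add_span S"
    and "\<And>a b. f (a + b) = f a + f b" "f 0 = 0" "\<And>s. s \<in> S \<Longrightarrow> f s \<in> S"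
  shows "f x \<in> add_span S"
  using assms(1) by induction (simp_all add: assms(2-4) add_span.intros)

lemma two_sided_ideal_ideal_prod:
  assumes A: "two_sided_ideal A" and B: "two_sided_ideal B"
  shows "two_sided_ideal (ideal_prod A B)"
  unfolding two_sided_ideal_def
proof (intro conjI ballI allI)
  let ?S = "{a * b |a b. a \<in> A \<and> b \<in> B}"
  fix x r assume "x \<in> ideal_prod A B"
  then have x: "x \<in> add_span ?S" by (simp add: ideal_prod_def)
  have closed: "- s \<in> ?S" "r * s \<in> ?S" "s * r \<in> ?S" if "s \<in> ?S" for s
  proof -
    obtain a b where s: "s = a * b" "a \<in> A" "b \<in> B" using \<open>s \<in> ?S\<close> by blast
    then have "- a \<in> A" "r * a \<in> A" "b * r \<in> B"
      using A B by (simp_all add: two_sided_ideal_def)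
    moreover have "- s = (- a) * b" "r * s = (r * a) * b" "s * r = a * (b * r)"
      using s by (simp_all add: mult.assoc)
    ultimately show "- s \<in> ?S" "r * s \<in> ?S" "s * r \<in> ?S" using s by blast+
  qed
  have "- x \<in> add_span ?S"
    by (rule add_span_map[OF x _ _ closed(1)]) simp_all
  moreover have "r * x \<in> add_span ?S"
    by (rule add_span_map[OF x _ _ closed(2)]) (simp_all add: distrib_left)
  moreover have "x * r \<in> add_span ?S"
    by (rule add_span_map[OF x _ _ closed(3)]) (simp_all add: distrib_right)
  ultimately show "- x \<in> ideal_prod A B" "r * x \<in> ideal_prod A B" "x * r \<in> ideal_prod A B"
    by (simp_all add: ideal_prod_def)
qed (simp_all add: ideal_prod_def add_span.intros)

lemma two_sided_ideal_prodseq: "(\<And>i. two_sided_ideal (F i)) \<Longrightarrow> two_sided_ideal (prodseq F k)"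
  by (induction F k rule: prodseq.induct) (simp_all add: two_sided_ideal_UNIV two_sided_ideal_ideal_prod)

lemma prodseq_SucI:
  assumes "\<And>i. two_sided_ideal (F i)" "x \<in> prodseq F k" "y \<in> F k"
  shows "x * y \<in> prodseq F (Suc k)"
proof (cases k)
  case 0
  then show ?thesis using assms by (simp add: two_sided_ideal_mult_left)
next
  case (Suc k')
  then show ?thesis using assms by (auto simp: ideal_prod_def intro!: add_span.gen)
qed

lemma prodseq_SucE [consumes 1, case_names zero add mult]:
  assumes "z \<in> prodseq F (Suc k)" "P 0" "\<And>a b. P a \<Longrightarrow> P b \<Longrightarrow> P (a + b)"
    "\<And>x y. x \<in> prodseq F k \<Longrightarrow> y \<in> F k \<Longrightarrow> P (x * y)"
  shows "P z"
proof (cases k)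
  case 0
  then show ?thesis using assms(1) assms(4)[of 1 z] by simp
next
  case (Suc k')
  then have "z \<in> add_span {a * b |a b. a \<in> prodseq F k \<and> b \<in> F k}"
    using assms(1) by (simp add: ideal_prod_def)
  then show ?thesis by induction (auto intro: assms(2-4))
qed

lemma prodseq_Suc_subset:
  assumes "\<And>i. two_sided_ideal (F i)"
  shows "prodseq F (Suc k) \<subseteq> prodseq F k"
proof
  fix z assume "z \<in> prodseq F (Suc k)"
  moreover have "two_sided_ideal (prodseq F k)"
    using assms by (rule two_sided_ideal_prodseq)
  ultimately show "z \<in> prodseq F k"
    by (induction rule: prodseq_SucE)
      (simp_all add: two_sided_ideal_zero two_sided_ideal_add two_sided_ideal_mult_right)
qed

lemma prodseq_antimono:
  assumes "\<And>i. two_sided_ideal (F i)" "k \<le> l"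
  shows "prodseq F l \<subseteq> prodseq F k"
  using assms(2)
proof (induction rule: dec_induct)
  case (step n)
  then show ?case using prodseq_Suc_subset[of F n, OF assms(1)] by blast
qed simp

lemma prodseq_drop:
  assumes "\<And>i. two_sided_ideal (F i)"
  shows "prodseq F (k + l) \<subseteq> prodseq (\<lambda>i. F (i + k)) l"
proof (induction l)
  case (Suc l)
  have ideal: "two_sided_ideal (prodseq (\<lambda>i. F (i + k)) (Suc l))"
    using assms by (rule two_sided_ideal_prodseq)
  show ?case
  proof
    fix z assume "z \<in> prodseq F (k + Suc l)"
    then have "z \<in> prodseq F (Suc (k + l))" by simp
    then show "z \<in> prodseq (\<lambda>i. F (i + k)) (Suc l)"
    proof (induction rule: prodseq_SucE)
      case (mult x y)
      then show ?case
        using Suc.IH prodseq_SucI[of "\<lambda>i. F (i + k)" x l y] assms by (auto simp: add.commute)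
    qed (use ideal in \<open>simp_all add: two_sided_ideal_zero two_sided_ideal_add\<close>)
  qed
qed simp

lemma prodseq_append:
  assumes "\<And>i. two_sided_ideal (F i)" "x \<in> prodseq F m" "y \<in> prodseq (\<lambda>i. F (i + m)) n"
  shows "x * y \<in> prodseq F (m + n)"
  using assms(3)
proof (induction n arbitrary: y)
  case 0
  then show ?case
    using two_sided_ideal_prodseq[of F m, OF assms(1)] assms(2) by (simp add: two_sided_ideal_mult_right)
next
  case (Suc n)
  have ideal: "two_sided_ideal (prodseq F (m + Suc n))"
    using assms(1) by (rule two_sided_ideal_prodseq)
  from Suc.prems show ?case
  proof (induction rule: prodseq_SucE)
    case (mult u v)
    then show ?case
      using Suc.IH prodseq_SucI[of F "x * u" "m + n" v] assms(1)
      by (simp add: mult.assoc add.commute)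
  qed (use ideal in \<open>simp_all add: two_sided_ideal_zero two_sided_ideal_add distrib_left\<close>)
qed

lemma prodseq_image:
  assumes "surj f" "ring_endo f" "\<And>i. two_sided_ideal (F i)" "x \<in> prodseq F n"
  shows "f x \<in> prodseq (\<lambda>i. f ` F i) n"
  using assms(4)
proof (induction n arbitrary: x)
  case (Suc n)
  have ideal: "two_sided_ideal (prodseq (\<lambda>i. f ` F i) (Suc n))"
    using two_sided_ideal_image[OF assms(1,2,3)] by (rule two_sided_ideal_prodseq)
  from Suc.prems show ?case
  proof (induction rule: prodseq_SucE)
    case (mult u v)
    then show ?case
      using Suc.IH prodseq_SucI[of "\<lambda>i. f ` F i" "f u" n "f v"]
        two_sided_ideal_image[OF assms(1,2,3)] by (simp add: ring_endo_mult[OF assms(2)])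
  qed (use ideal assms(2) in \<open>simp_all add: two_sided_ideal_zero two_sided_ideal_add
      ring_endo_zero ring_endo_add\<close>)
qed simp

lemma lmono_0 [simp]: "lmono 0 n = lzero"
  by (simp add: lmono_def lzero_def fun_eq_iff)

lemma ladd_lmono: "ladd (lmono a n) (lmono b n) = lmono (a + b) n"
  by (simp add: lmono_def ladd_def fun_eq_iff)

lemma lmono_eq_iff [simp]: "lmono a n = lmono b n \<longleftrightarrow> a = b"
  by (metis lmono_def)

lemma lmono_eq_lzero_iff [simp]: "lmono a n = lzero \<longleftrightarrow> a = 0"
  by (metis lmono_0 lmono_eq_iff)

lemma lmono_in_laurent: "lmono a n \<in> laurent"
proof -
  have "{m. lmono a n m \<noteq> 0} \<subseteq> {n}" by (simp add: lmono_def subset_iff)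
  then show ?thesis unfolding laurent_def using finite_subset by blast
qed

lemma lmult_eq_sum_superset:
  assumes "finite S" "{i. f i \<noteq> 0} \<subseteq> S"
  shows "lmult \<sigma> f g n = (\<Sum>i\<in>S. f i * zpow \<sigma> i (g (n - i)))"
  unfolding lmult_def by (rule sum.mono_neutral_left) (use assms in auto)

lemma zpow_0 [simp]: "zpow \<sigma> 0 = id"
  by (simp add: zpow_def)

lemma lmult_lmono_0_left: "lmult \<sigma> (lmono r 0) g n = r * g n"
proof -
  have "lmult \<sigma> (lmono r 0) g n = (\<Sum>i\<in>{0}. lmono r 0 i * zpow \<sigma> i (g (n - i)))"
    by (rule lmult_eq_sum_superset) (auto simp: lmono_def)
  then show ?thesis by (simp add: lmono_def)
qed

lemma lzero_in_subalg:
  assumes "k_algebra alg" "is_subalg alg \<sigma> B"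
  shows "lzero \<in> B"
proof -
  have "alg (0 + 0) = alg 0 + alg 0"
    using assms(1) by (simp only: k_algebra_def)
  then have "alg 0 = 0" by simp
  then have "lscale alg 0 lone = lzero"
    by (simp add: lscale_def lzero_def fun_eq_iff)
  moreover have "lscale alg 0 lone \<in> B"
    using assms(2) by (simp add: is_subalg_def)
  ultimately show ?thesis by simp
qed

lemma laurent_in_subalg:
  assumes sub: "is_subalg alg \<sigma> B" and zero: "lzero \<in> B"
    and f: "f \<in> laurent" and mono: "\<And>n. lmono (f n) n \<in> B"
  shows "f \<in> B"
proof -
  have "f \<in> B" if "finite S" "{n. f n \<noteq> 0} \<subseteq> S" "\<And>n. lmono (f n) n \<in> B" for S f
    using that
  proof (induction S arbitrary: f rule: finite_induct)
    case empty
    then have "f = lzero" by (auto simp: lzero_def fun_eq_iff)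
    then show ?case using zero by simp
  next
    case (insert s S)
    have "{n. (f(s := 0)) n \<noteq> 0} \<subseteq> S"
      using insert.prems(1) by auto
    moreover have "lmono ((f(s := 0)) n) n \<in> B" for n
      using insert.prems(2) zero by (cases "n = s") simp_all
    ultimately have "f(s := 0) \<in> B"
      by (rule insert.IH)
    then have "ladd (f(s := 0)) (lmono (f s) s) \<in> B"
      using sub insert.prems(2) by (simp add: is_subalg_def)
    moreover have "ladd (f(s := 0)) (lmono (f s) s) = f"
      by (auto simp: ladd_def lmono_def fun_eq_iff)
    ultimately show ?case by simp
  qed
  with f mono show ?thesis by (simp add: laurent_def)
qed

lemma lmono_prodseq_in_subalg:
  assumes sub: "is_subalg alg \<sigma> B" and zero: "lzero \<in> B"
    and base: "\<And>x. lmono x (deg 0) \<in> B"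
    and step: "\<And>k x y. lmono x (deg k) \<in> B \<Longrightarrow> y \<in> F k \<Longrightarrow> lmono (x * y) (deg (Suc k)) \<in> B"
  shows "x \<in> prodseq F k \<Longrightarrow> lmono x (deg k) \<in> B"
proof (induction k arbitrary: x)
  case (Suc k)
  from Suc.prems show ?case
  proof (induction rule: prodseq_SucE)
    case (add a b)
    then have "ladd (lmono a (deg (Suc k))) (lmono b (deg (Suc k))) \<in> B"
      using sub by (simp add: is_subalg_def)
    then show ?case by (simp add: ladd_lmono)
  next
    case (mult x y)
    then show ?case using Suc.IH step by blast
  qed (simp add: zero)
qed (simp add: base)

locale ring_automorphism =
  fixes \<sigma> :: "'r::ring_1 \<Rightarrow> 'r"
  assumes bij: "bij \<sigma>" and endo: "ring_endo \<sigma>"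
begin

lemma zpow_plus_1: "zpow \<sigma> (i + 1) = \<sigma> \<circ> zpow \<sigma> i"
proof (cases "0 \<le> i")
  case True
  then have "nat (i + 1) = Suc (nat i)" by simp
  with True show ?thesis by (simp add: zpow_def)
next
  case False
  then consider "i = -1" | "nat (- i) = Suc (nat (- (i + 1)))" "i + 1 < 0" by linarith
  then show ?thesis
    using False bij by cases (auto simp: zpow_def fun_eq_iff bij_is_surj surj_f_inv_f)
qed

lemma zpow_minus_1: "zpow \<sigma> (i - 1) = inv \<sigma> \<circ> zpow \<sigma> i"
  using zpow_plus_1[of "i - 1"] bij by (simp add: fun_eq_iff bij_inv_eq_iff)

lemma zpow_add: "zpow \<sigma> (i + j) = zpow \<sigma> i \<circ> zpow \<sigma> j"
proof (induction i rule: int_induct[where k = 0])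
  case (step1 i)
  then show ?case
    using zpow_plus_1[of i] zpow_plus_1[of "i + j"] by (simp add: ac_simps)
next
  case (step2 i)
  then show ?case
    using zpow_minus_1[of i] zpow_minus_1[of "i + j"] by (simp add: algebra_simps comp_assoc)
qed simp

lemma zpow_zpow: "zpow \<sigma> i (zpow \<sigma> j x) = zpow \<sigma> (i + j) x"
  by (simp add: zpow_add)

lemma zpow_zpow_uminus [simp]: "zpow \<sigma> i (zpow \<sigma> (- i) x) = x"
  by (simp add: zpow_zpow)

lemma surj_zpow: "surj (zpow \<sigma> i)"
  by (metis zpow_zpow_uminus surjI)

lemma ring_endo_zpow: "ring_endo (zpow \<sigma> i)"
  using ring_endo_funpow[OF endo] ring_endo_funpow[OF ring_endo_inv[OF bij endo]]
  by (simp add: zpow_def)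

lemma zpow_zero [simp]: "zpow \<sigma> i 0 = 0"
  by (rule ring_endo_zero[OF ring_endo_zpow])

lemma zpow_eq_0_iff: "zpow \<sigma> i x = 0 \<longleftrightarrow> x = 0"
  by (metis zpow_zpow_uminus minus_minus zpow_zero)

lemma zpow_fixed:
  assumes "\<sigma> z = z"
  shows "zpow \<sigma> i z = z"
proof -
  have "inv \<sigma> z = z" using assms bij by (metis bij_inv_eq_iff)
  then have "(inv \<sigma> ^^ n) z = z" "(\<sigma> ^^ n) z = z" for n
    using assms by (induction n) auto
  then show ?thesis by (simp add: zpow_def)
qed

lemma two_sided_ideal_zpow_image: "two_sided_ideal A \<Longrightarrow> two_sided_ideal (zpow \<sigma> i ` A)"
  by (rule two_sided_ideal_image[OF surj_zpow ring_endo_zpow])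

lemma prodseq_mult_zpow_shift:
  assumes "\<And>i. two_sided_ideal (F i)" "\<And>i. zpow \<sigma> s ` F i = F (i + p)"
    and "x \<in> prodseq F p" "y \<in> prodseq F q"
  shows "x * zpow \<sigma> s y \<in> prodseq F (p + q)"
proof -
  have "zpow \<sigma> s y \<in> prodseq (\<lambda>i. zpow \<sigma> s ` F i) q"
    using surj_zpow ring_endo_zpow assms(1,4) by (rule prodseq_image)
  then show ?thesis
    using prodseq_append[OF assms(1,3)] assms(2) by simp
qed

lemma zpow_prodseq_drop:
  assumes "\<And>i. two_sided_ideal (F i)" "\<And>i. zpow \<sigma> s ` F (i + p) = G i"
    and "y \<in> prodseq F (p + r)"
  shows "zpow \<sigma> s y \<in> prodseq G r"
proof -
  have "zpow \<sigma> s y \<in> prodseq (\<lambda>i. zpow \<sigma> s ` F i) (p + r)"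
    using surj_zpow ring_endo_zpow assms(1,3) by (rule prodseq_image)
  also have "\<dots> \<subseteq> prodseq (\<lambda>i. zpow \<sigma> s ` F (i + p)) r"
    by (rule prodseq_drop) (rule two_sided_ideal_zpow_image[OF assms(1)])
  finally show ?thesis
    using assms(2) by simp
qed

lemma lmult_lmono_lmono: "lmult \<sigma> (lmono a m) (lmono b k) = lmono (a * zpow \<sigma> m b) (m + k)"
proof
  fix n
  have "lmult \<sigma> (lmono a m) (lmono b k) n = (\<Sum>i\<in>{m}. lmono a m i * zpow \<sigma> i (lmono b k (n - i)))"
    by (rule lmult_eq_sum_superset) (auto simp: lmono_def)
  then show "lmult \<sigma> (lmono a m) (lmono b k) n = lmono (a * zpow \<sigma> m b) (m + k) n"
    by (auto simp: lmono_def)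
qed

lemma lmult_lmono_0_right:
  assumes "f \<in> laurent"
  shows "lmult \<sigma> f (lmono r 0) n = f n * zpow \<sigma> n r"
proof -
  have "lmult \<sigma> f (lmono r 0) n = (\<Sum>i\<in>insert n {i. f i \<noteq> 0}. f i * zpow \<sigma> i (lmono r 0 (n - i)))"
    by (rule lmult_eq_sum_superset) (use assms in \<open>auto simp: laurent_def\<close>)
  also have "\<dots> = (\<Sum>i\<in>insert n {i. f i \<noteq> 0}. if i = n then f n * zpow \<sigma> n r else 0)"
    by (rule sum.cong) (auto simp: lmono_def)
  also have "\<dots> = f n * zpow \<sigma> n r"
    using assms by (simp add: laurent_def)
  finally show ?thesis .
qed

lemma lmult_in_laurent:
  assumes f: "f \<in> laurent" and g: "g \<in> laurent"
  shows "lmult \<sigma> f g \<in> laurent"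
proof -
  let ?F = "{i. f i \<noteq> 0}" and ?G = "{j. g j \<noteq> 0}"
  have "{n. lmult \<sigma> f g n \<noteq> 0} \<subseteq> (\<lambda>(i, j). i + j) ` (?F \<times> ?G)"
  proof
    fix n assume n: "n \<in> {n. lmult \<sigma> f g n \<noteq> 0}"
    have "\<exists>i\<in>?F. g (n - i) \<noteq> 0"
    proof (rule ccontr)
      assume "\<not> ?thesis"
      then have "lmult \<sigma> f g n = 0" unfolding lmult_def by (intro sum.neutral) auto
      with n show False by simp
    qed
    then obtain i where "i \<in> ?F" "n - i \<in> ?G" by auto
    then show "n \<in> (\<lambda>(i, j). i + j) ` (?F \<times> ?G)"
      by (intro image_eqI[of _ _ "(i, n - i)"]) auto
  qed
  moreover have "finite ((\<lambda>(i, j). i + j) ` (?F \<times> ?G))"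
    using f g by (simp add: laurent_def)
  ultimately show ?thesis
    unfolding laurent_def using finite_subset by blast
qed

lemma lmult_neq_lzero:
  assumes dom: "ring_domain TYPE('r)" and f: "f \<in> laurent" "f \<noteq> lzero"
    and g: "g \<in> laurent" "g \<noteq> lzero"
  shows "lmult \<sigma> f g \<noteq> lzero"
proof -
  let ?F = "{i. f i \<noteq> 0}" and ?G = "{j. g j \<noteq> 0}"
  have F: "finite ?F" "?F \<noteq> {}" and G: "finite ?G" "?G \<noteq> {}"
    using f g by (auto simp: laurent_def lzero_def fun_eq_iff)
  define i0 where "i0 = Max ?F"
  define j0 where "j0 = Max ?G"
  have i0: "f i0 \<noteq> 0" "i0 \<in> ?F" using Max_in[OF F] i0_def by auto
  have j0: "g j0 \<noteq> 0" using Max_in[OF G] j0_def by auto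
  have "f i * zpow \<sigma> i (g (i0 + j0 - i)) = 0" if "i \<in> ?F" "i \<noteq> i0" for i
  proof -
    have "i < i0" using that F i0_def by (simp add: order_neq_le_trans)
    then have "i0 + j0 - i \<notin> ?G" using G j0_def by (auto dest: Max_ge)
    then show ?thesis by simp
  qed
  then have "lmult \<sigma> f g (i0 + j0) = f i0 * zpow \<sigma> i0 (g j0)"
    unfolding lmult_def by (subst sum.remove[OF F(1) i0(2)]) (simp add: sum.neutral)
  also have "\<dots> \<noteq> 0"
    using dom i0 j0 zpow_eq_0_iff unfolding ring_domain_def by metis
  finally show ?thesis by (auto simp: lzero_def)
qed

end

locale bell_rogalski = ring_automorphism \<sigma> for \<sigma> :: "'r::ring_1 \<Rightarrow> 'r" +
  fixes H J :: "'r set"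
  assumes ideal_H: "two_sided_ideal H" and ideal_J: "two_sided_ideal J"
begin

definition J_factor :: "nat \<Rightarrow> 'r set" where
  "J_factor i = zpow \<sigma> (int i) ` J"

definition H_factor :: "nat \<Rightarrow> 'r set" where
  "H_factor i = zpow \<sigma> (- int i - 1) ` H"

lemma two_sided_ideal_J_factor: "two_sided_ideal (J_factor i)"
  unfolding J_factor_def by (rule two_sided_ideal_zpow_image[OF ideal_J])

lemma two_sided_ideal_H_factor: "two_sided_ideal (H_factor i)"
  unfolding H_factor_def by (rule two_sided_ideal_zpow_image[OF ideal_H])

lemma Iseq_of_nat: "Iseq \<sigma> H J (int k) = prodseq J_factor k"
  by (simp add: Iseq_def J_factor_def[abs_def])

lemma Iseq_uminus_of_nat: "Iseq \<sigma> H J (- int k) = prodseq H_factor k"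
  by (cases "k = 0") (simp_all add: Iseq_def H_factor_def[abs_def])

lemma Iseq_0: "Iseq \<sigma> H J 0 = UNIV"
  by (simp add: Iseq_def)

lemma Iseq_1: "Iseq \<sigma> H J 1 = J"
  by (simp add: Iseq_def)

lemma Iseq_minus_1: "Iseq \<sigma> H J (- 1) = zpow \<sigma> (- 1) ` H"
  by (simp add: Iseq_def)

lemma two_sided_ideal_Iseq: "two_sided_ideal (Iseq \<sigma> H J n)"
  using two_sided_ideal_prodseq[OF two_sided_ideal_J_factor]
    two_sided_ideal_prodseq[OF two_sided_ideal_H_factor]
  by (cases n rule: int_cases2) (simp_all only: Iseq_of_nat Iseq_uminus_of_nat)

lemma Iseq_mult_of_nat_of_nat:
  assumes "a \<in> Iseq \<sigma> H J (int p)" "b \<in> Iseq \<sigma> H J (int q)"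
  shows "a * zpow \<sigma> (int p) b \<in> Iseq \<sigma> H J (int p + int q)"
proof -
  have "zpow \<sigma> (int p) ` J_factor i = J_factor (i + p)" for i
    by (auto simp: J_factor_def image_image zpow_zpow add.commute)
  then have "a * zpow \<sigma> (int p) b \<in> prodseq J_factor (p + q)"
    using prodseq_mult_zpow_shift[of J_factor, OF two_sided_ideal_J_factor] assms
    by (simp add: Iseq_of_nat)
  then show ?thesis
    by (metis Iseq_of_nat of_nat_add)
qed

lemma Iseq_mult_uminus_uminus:
  assumes "a \<in> Iseq \<sigma> H J (- int p)" "b \<in> Iseq \<sigma> H J (- int q)"
  shows "a * zpow \<sigma> (- int p) b \<in> Iseq \<sigma> H J (- int p + - int q)"
proof -
  have "zpow \<sigma> (- int p) ` H_factor i = H_factor (i + p)" for i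
    by (auto simp: H_factor_def image_image zpow_zpow algebra_simps)
  then have "a * zpow \<sigma> (- int p) b \<in> prodseq H_factor (p + q)"
    using prodseq_mult_zpow_shift[of H_factor, OF two_sided_ideal_H_factor] assms
    by (simp add: Iseq_uminus_of_nat)
  then show ?thesis
    by (metis Iseq_uminus_of_nat minus_add_distrib of_nat_add)
qed

lemma Iseq_mult_of_nat_uminus:
  assumes a: "a \<in> Iseq \<sigma> H J (int p)" and b: "b \<in> Iseq \<sigma> H J (- int q)"
  shows "a * zpow \<sigma> (int p) b \<in> Iseq \<sigma> H J (int p + - int q)"
proof (cases "q \<le> p")
  case True
  then obtain r where r: "p = q + r" using le_Suc_ex by blast
  have "a \<in> prodseq J_factor p"
    using a by (simp add: Iseq_of_nat)
  then have "a \<in> prodseq J_factor r"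
    using prodseq_antimono[of J_factor r p, OF two_sided_ideal_J_factor] r by auto
  then show ?thesis
    using two_sided_ideal_mult_right[OF two_sided_ideal_Iseq[of "int r", unfolded Iseq_of_nat]] r
    by (simp add: Iseq_of_nat)
next
  case False
  then obtain r where r: "q = p + r" by (metis le_Suc_ex nat_le_linear)
  have "zpow \<sigma> (int p) ` H_factor (i + p) = H_factor i" for i
    unfolding H_factor_def image_image zpow_zpow
    by (rule arg_cong[where f = "\<lambda>k. zpow \<sigma> k ` H"]) simp
  moreover have "b \<in> prodseq H_factor (p + r)"
    using b r[symmetric] by (simp add: Iseq_uminus_of_nat)
  ultimately have "zpow \<sigma> (int p) b \<in> prodseq H_factor r"
    using zpow_prodseq_drop[of H_factor, OF two_sided_ideal_H_factor] by blast
  then show ?thesis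
    using two_sided_ideal_mult_left[OF two_sided_ideal_Iseq[of "- int r", unfolded Iseq_uminus_of_nat]] r
    by (simp add: Iseq_uminus_of_nat)
qed

lemma Iseq_mult_uminus_of_nat:
  assumes a: "a \<in> Iseq \<sigma> H J (- int p)" and b: "b \<in> Iseq \<sigma> H J (int q)"
  shows "a * zpow \<sigma> (- int p) b \<in> Iseq \<sigma> H J (- int p + int q)"
proof (cases "p \<le> q")
  case True
  then obtain r where r: "q = p + r" using le_Suc_ex by blast
  have "zpow \<sigma> (- int p) ` J_factor (i + p) = J_factor i" for i
    by (auto simp: J_factor_def image_image zpow_zpow)
  moreover have "b \<in> prodseq J_factor (p + r)"
    using b r[symmetric] by (simp add: Iseq_of_nat)
  ultimately have "zpow \<sigma> (- int p) b \<in> prodseq J_factor r"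
    using zpow_prodseq_drop[of J_factor, OF two_sided_ideal_J_factor] by blast
  then show ?thesis
    using two_sided_ideal_mult_left[OF two_sided_ideal_Iseq[of "int r", unfolded Iseq_of_nat]] r
    by (simp add: Iseq_of_nat)
next
  case False
  then obtain r where r: "p = q + r" by (metis le_Suc_ex nat_le_linear)
  have "a \<in> prodseq H_factor p"
    using a by (simp add: Iseq_uminus_of_nat)
  then have "a \<in> prodseq H_factor r"
    using prodseq_antimono[of H_factor r p, OF two_sided_ideal_H_factor] r by auto
  then show ?thesis
    using two_sided_ideal_mult_right[OF two_sided_ideal_Iseq[of "- int r", unfolded Iseq_uminus_of_nat]] r
    by (simp add: Iseq_uminus_of_nat)
qed

lemma Iseq_mult:
  assumes "a \<in> Iseq \<sigma> H J m" "b \<in> Iseq \<sigma> H J n"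
  shows "a * zpow \<sigma> m b \<in> Iseq \<sigma> H J (m + n)"
  using assms Iseq_mult_of_nat_of_nat Iseq_mult_uminus_uminus
    Iseq_mult_of_nat_uminus Iseq_mult_uminus_of_nat
  by (cases m rule: int_cases2; cases n rule: int_cases2) blast+

lemma lmono_in_BR: "a \<in> Iseq \<sigma> H J n \<Longrightarrow> lmono a n \<in> BR \<sigma> H J"
  unfolding BR_def using lmono_in_laurent
  by (simp add: lmono_def two_sided_ideal_zero[OF two_sided_ideal_Iseq])

lemma BR_comp_subset: "BR_comp \<sigma> H J n \<subseteq> BR \<sigma> H J"
  by (auto simp: BR_comp_def intro: lmono_in_BR)

lemma BR_comp_mult:
  "f \<in> BR_comp \<sigma> H J m \<Longrightarrow> g \<in> BR_comp \<sigma> H J n \<Longrightarrow> lmult \<sigma> f g \<in> BR_comp \<sigma> H J (m + n)"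
  by (auto simp: BR_comp_def lmult_lmono_lmono intro: Iseq_mult)

lemma is_subalg_BR:
  assumes "k_algebra alg"
  shows "is_subalg alg \<sigma> (BR \<sigma> H J)"
  unfolding is_subalg_def
proof (intro conjI ballI allI)
  show "BR \<sigma> H J \<subseteq> laurent" by (auto simp: BR_def)
  show "lone \<in> BR \<sigma> H J" unfolding lone_def by (rule lmono_in_BR) (simp add: Iseq_0)
next
  fix f g assume f: "f \<in> BR \<sigma> H J" and g: "g \<in> BR \<sigma> H J"
  have "{n. ladd f g n \<noteq> 0} \<subseteq> {n. f n \<noteq> 0} \<union> {n. g n \<noteq> 0}"
    by (auto simp: ladd_def)
  with f g show "ladd f g \<in> BR \<sigma> H J"
    by (auto simp: BR_def laurent_def ladd_def
        intro: finite_subset two_sided_ideal_add[OF two_sided_ideal_Iseq])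
  have "f i * zpow \<sigma> i (g (n - i)) \<in> Iseq \<sigma> H J n" for i n
    using Iseq_mult[of "f i" i "g (n - i)" "n - i"] f g by (simp add: BR_def)
  then have "lmult \<sigma> f g n \<in> Iseq \<sigma> H J n" for n
    unfolding lmult_def by (rule two_sided_ideal_sum[OF two_sided_ideal_Iseq])
  with f g show "lmult \<sigma> f g \<in> BR \<sigma> H J"
    by (simp add: BR_def lmult_in_laurent)
next
  fix c f assume f: "f \<in> BR \<sigma> H J"
  have "{n. lscale alg c f n \<noteq> 0} \<subseteq> {n. f n \<noteq> 0}"
    by (auto simp: lscale_def)
  with f show "lscale alg c f \<in> BR \<sigma> H J"
    by (auto simp: BR_def laurent_def lscale_def
        intro: finite_subset two_sided_ideal_mult_left[OF two_sided_ideal_Iseq])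
qed

lemma lmono_Iseq_in_subalg:
  assumes alg: "k_algebra alg" and sub: "is_subalg alg \<sigma> B"
    and gens: "{lmono r 0 | r. True} \<union> {lmono j 1 | j. j \<in> J}
           \<union> {lmono (zpow \<sigma> (-1) h) (-1) | h. h \<in> H} \<subseteq> B"
    and a: "a \<in> Iseq \<sigma> H J n"
  shows "lmono a n \<in> B"
proof -
  have zero: "lzero \<in> B" using alg sub by (rule lzero_in_subalg)
  have mult: "lmult \<sigma> f g \<in> B" if "f \<in> B" "g \<in> B" for f g
    using sub that by (simp add: is_subalg_def)
  have base: "lmono x 0 \<in> B" for x using gens by blast
  have J_step: "lmono (x * y) (int (Suc k)) \<in> B"
    if x: "lmono x (int k) \<in> B" and "y \<in> J_factor k" for k x y
  proof -
    obtain j where "j \<in> J" "y = zpow \<sigma> (int k) j"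
      using \<open>y \<in> J_factor k\<close> by (auto simp: J_factor_def)
    then have "lmult \<sigma> (lmono x (int k)) (lmono j 1) = lmono (x * y) (int (Suc k))"
      by (simp add: lmult_lmono_lmono add.commute)
    moreover have "lmono j 1 \<in> B" using gens \<open>j \<in> J\<close> by blast
    ultimately show ?thesis using mult[OF x] by metis
  qed
  have H_step: "lmono (x * y) (- int (Suc k)) \<in> B"
    if x: "lmono x (- int k) \<in> B" and "y \<in> H_factor k" for k x y
  proof -
    obtain h where "h \<in> H" "y = zpow \<sigma> (- int k - 1) h"
      using \<open>y \<in> H_factor k\<close> by (auto simp: H_factor_def)
    then have "lmult \<sigma> (lmono x (- int k)) (lmono (zpow \<sigma> (- 1) h) (- 1))
        = lmono (x * y) (- int k + - 1)"
      by (simp add: lmult_lmono_lmono zpow_zpow)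
    also have "- int k + - 1 = - int (Suc k)"
      by simp
    moreover have "lmono (zpow \<sigma> (- 1) h) (- 1) \<in> B"
      using gens \<open>h \<in> H\<close> by blast
    ultimately show ?thesis using mult[OF x] by metis
  qed
  have J_part: "lmono x (int k) \<in> B" if "x \<in> prodseq J_factor k" for x k
    by (rule lmono_prodseq_in_subalg[where deg = int, OF sub zero _ J_step that]) (simp add: base)
  have H_part: "lmono x (- int k) \<in> B" if "x \<in> prodseq H_factor k" for x k
    by (rule lmono_prodseq_in_subalg[where deg = "\<lambda>k. - int k", OF sub zero _ H_step that])
      (simp add: base)
  show ?thesis
    using a J_part H_part
    by (cases n rule: int_cases2) (simp_all add: Iseq_of_nat Iseq_uminus_of_nat)
qed

lemma BR_subset_subalg:
  assumes alg: "k_algebra alg" and sub: "is_subalg alg \<sigma> B"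
    and gens: "{lmono r 0 | r. True} \<union> {lmono j 1 | j. j \<in> J}
           \<union> {lmono (zpow \<sigma> (-1) h) (-1) | h. h \<in> H} \<subseteq> B"
  shows "BR \<sigma> H J \<subseteq> B"
proof
  fix f assume f: "f \<in> BR \<sigma> H J"
  show "f \<in> B"
  proof (rule laurent_in_subalg[OF sub lzero_in_subalg[OF alg sub]])
    show "f \<in> laurent"
      using f by (simp add: BR_def)
    show "lmono (f n) n \<in> B" for n
      using f by (intro lmono_Iseq_in_subalg[OF alg sub gens]) (simp add: BR_def)
  qed
qed

lemma BR_eq_gen_subalg:
  assumes alg: "k_algebra alg"
  shows "BR \<sigma> H J = gen_subalg alg \<sigma>
          ({lmono r 0 | r. True} \<union> {lmono j 1 | j. j \<in> J}
           \<union> {lmono (zpow \<sigma> (-1) h) (-1) | h. h \<in> H})" (is "_ = gen_subalg alg \<sigma> ?S")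
proof
  show "BR \<sigma> H J \<subseteq> gen_subalg alg \<sigma> ?S"
    unfolding gen_subalg_def using BR_subset_subalg[OF alg] by blast
  have "?S \<subseteq> BR \<sigma> H J"
    using lmono_in_BR by (auto simp: Iseq_0 Iseq_1 Iseq_minus_1)
  then show "gen_subalg alg \<sigma> ?S \<subseteq> BR \<sigma> H J"
    unfolding gen_subalg_def using is_subalg_BR[OF alg] by blast
qed

lemma lring_domain_BR_iff: "lring_domain \<sigma> (BR \<sigma> H J) \<longleftrightarrow> ring_domain TYPE('r)"
proof
  assume dom: "lring_domain \<sigma> (BR \<sigma> H J)"
  have "a = 0 \<or> b = 0" if "a * b = (0::'r)" for a b
  proof -
    have "lmult \<sigma> (lmono a 0) (lmono b 0) = lzero"
      using that by (simp add: lmult_lmono_lmono)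
    moreover have "lmono a 0 \<in> BR \<sigma> H J" "lmono b 0 \<in> BR \<sigma> H J"
      by (simp_all add: lmono_in_BR Iseq_0)
    ultimately show ?thesis
      using dom unfolding lring_domain_def by (metis lmono_eq_lzero_iff)
  qed
  moreover have "(1::'r) \<noteq> 0"
    using dom by (auto simp: lring_domain_def lone_def lzero_def)
  ultimately show "ring_domain TYPE('r)"
    by (auto simp: ring_domain_def)
next
  assume dom: "ring_domain TYPE('r)"
  then have "(lone :: int \<Rightarrow> 'r) \<noteq> lzero"
    by (auto simp: ring_domain_def lone_def lzero_def lmono_def fun_eq_iff)
  with lmult_neq_lzero[OF dom] show "lring_domain \<sigma> (BR \<sigma> H J)"
    by (auto simp: lring_domain_def BR_def)
qed

lemma lcenter_BR_subset:
  assumes dom: "ring_domain TYPE('r)"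
    and no_twisted_central: "\<forall>k::int. k \<noteq> 0 \<longrightarrow> \<not> (\<exists>a. a \<noteq> 0 \<and> (\<forall>r. r * a = a * zpow \<sigma> k r))"
    and J_nonzero: "J \<noteq> {0}"
  shows "lcenter \<sigma> (BR \<sigma> H J) \<subseteq> {lmono z 0 | z. z \<in> ring_center \<and> \<sigma> z = z}"
proof
  fix f assume "f \<in> lcenter \<sigma> (BR \<sigma> H J)"
  then have f: "f \<in> BR \<sigma> H J" "f \<in> laurent"
    and comm: "\<And>g. g \<in> BR \<sigma> H J \<Longrightarrow> lmult \<sigma> f g = lmult \<sigma> g f"
    by (auto simp: lcenter_def BR_def)
  have twisted: "r * f n = f n * zpow \<sigma> n r" for r n
    using comm[of "lmono r 0"] lmult_lmono_0_left[of \<sigma> r f n] lmult_lmono_0_right[OF f(2), of r n]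
    by (simp add: lmono_in_BR Iseq_0)
  then have "f n = 0" if "n \<noteq> 0" for n
    using no_twisted_central that by blast
  then have f_eq: "f = lmono (f 0) 0"
    by (auto simp: lmono_def fun_eq_iff)
  have central: "f 0 \<in> ring_center"
    using twisted[of _ 0] by (simp add: ring_center_def)
  obtain j where j: "j \<in> J" "j \<noteq> 0"
    using J_nonzero two_sided_ideal_zero[OF ideal_J] by blast
  have "lmult \<sigma> f (lmono j 1) = lmult \<sigma> (lmono j 1) f"
    using comm j by (simp add: lmono_in_BR Iseq_1)
  then have "f 0 * j = j * \<sigma> (f 0)"
    by (subst (asm) (1 2) f_eq) (simp add: lmult_lmono_lmono zpow_def)
  then have "j * (f 0 - \<sigma> (f 0)) = 0"
    using central by (simp add: ring_center_def right_diff_distrib)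
  then have "\<sigma> (f 0) = f 0"
    using dom j(2) unfolding ring_domain_def by (metis eq_iff_diff_eq_0)
  with f_eq central show "f \<in> {lmono z 0 | z. z \<in> ring_center \<and> \<sigma> z = z}"
    by blast
qed

lemma fixed_center_subset_lcenter_BR:
  "{lmono z 0 | z. z \<in> ring_center \<and> \<sigma> z = z} \<subseteq> lcenter \<sigma> (BR \<sigma> H J)"
proof
  fix f assume "f \<in> {lmono z 0 | z. z \<in> ring_center \<and> \<sigma> z = z}"
  then obtain z where z: "f = lmono z 0" "z \<in> ring_center" "\<sigma> z = z" by blast
  have "lmult \<sigma> f g = lmult \<sigma> g f" if "g \<in> BR \<sigma> H J" for g
  proof
    fix n
    have "lmult \<sigma> f g n = z * g n"
      using z(1) by (simp add: lmult_lmono_0_left)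
    also have "\<dots> = g n * z"
      using z(2) by (simp add: ring_center_def)
    also have "\<dots> = lmult \<sigma> g f n"
      using z(1) that by (simp add: BR_def lmult_lmono_0_right zpow_fixed[OF z(3)])
    finally show "lmult \<sigma> f g n = lmult \<sigma> g f n" .
  qed
  then show "f \<in> lcenter \<sigma> (BR \<sigma> H J)"
    using z by (simp add: lcenter_def lmono_in_BR Iseq_0)
qed

lemma lcenter_BR:
  assumes "ring_domain TYPE('r)"
    and "\<forall>k::int. k \<noteq> 0 \<longrightarrow> \<not> (\<exists>a. a \<noteq> 0 \<and> (\<forall>r. r * a = a * zpow \<sigma> k r))"
    and "J \<noteq> {0}"
  shows "lcenter \<sigma> (BR \<sigma> H J) = {lmono z 0 | z. z \<in> ring_center \<and> \<sigma> z = z}"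
  using lcenter_BR_subset[OF assms] fixed_center_subset_lcenter_BR by (rule equalityI)

end

theorem lemma2p1:
  fixes alg :: "'k::field \<Rightarrow> 'r::ring_1"
    and \<sigma> :: "'r \<Rightarrow> 'r"
    and H J :: "'r set"
  assumes "k_algebra alg"
    and "k_automorphism alg \<sigma>"
    and "two_sided_ideal H" and "two_sided_ideal J"
    and "\<forall>n. Iseq \<sigma> H J n \<noteq> {0}"
  shows "(is_subalg alg \<sigma> (BR \<sigma> H J)
          \<and> (\<forall>n. BR_comp \<sigma> H J n \<subseteq> BR \<sigma> H J)
          \<and> (\<forall>m n. \<forall>f\<in>BR_comp \<sigma> H J m. \<forall>g\<in>BR_comp \<sigma> H J n.
                lmult \<sigma> f g \<in> BR_comp \<sigma> H J (m + n)))
     \<and> BR \<sigma> H J = gen_subalg alg \<sigma>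
          ({lmono r 0 | r. True} \<union> {lmono j 1 | j. j \<in> J}
           \<union> {lmono (zpow \<sigma> (-1) h) (-1) | h. h \<in> H})
     \<and> (lring_domain \<sigma> (BR \<sigma> H J) \<longleftrightarrow> ring_domain TYPE('r))
     \<and> ((ring_domain TYPE('r)
         \<and> (\<forall>n::nat. n > 0 \<longrightarrow> \<sigma> ^^ n \<noteq> id)
         \<and> (\<forall>k::int. k \<noteq> 0 \<longrightarrow> \<not> (\<exists>a. a \<noteq> 0 \<and> (\<forall>r. r * a = a * zpow \<sigma> k r))))
        \<longrightarrow> lcenter \<sigma> (BR \<sigma> H J) = {lmono z 0 | z. z \<in> ring_center \<and> \<sigma> z = z})"
proof -
  interpret bell_rogalski \<sigma> H J
    using assms(2-4) by unfold_locales (simp_all add: k_automorphism_def ring_endo_def)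
  have "J \<noteq> {0}"
    using assms(5) Iseq_1 by metis
  show ?thesis
  proof (intro conjI allI ballI impI)
    show "is_subalg alg \<sigma> (BR \<sigma> H J)"
      by (rule is_subalg_BR[OF assms(1)])
  next
    assume "ring_domain TYPE('r) \<and> (\<forall>n::nat. n > 0 \<longrightarrow> \<sigma> ^^ n \<noteq> id)
      \<and> (\<forall>k::int. k \<noteq> 0 \<longrightarrow> \<not> (\<exists>a. a \<noteq> 0 \<and> (\<forall>r. r * a = a * zpow \<sigma> k r)))"
    \<comment> \<open>The infinite order of \<sigma> is not needed: it is the case a = 1 of the last hypothesis.\<close>
    then show "lcenter \<sigma> (BR \<sigma> H J) = {lmono z 0 | z. z \<in> ring_center \<and> \<sigma> z = z}"
      using lcenter_BR \<open>J \<noteq> {0}\<close> by blast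
  qed (rule BR_comp_subset BR_comp_mult BR_eq_gen_subalg[OF assms(1)] lring_domain_BR_iff; assumption)+
qed

end
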